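(* Let $K$ be a power of two and let $\mathcal S_1,\dots,\mathcal S_K$ be sorted sequences of strings with LCP arrays $H_1,\dots,H_K$, all strings having a common prefix of length $\bar h$. The $K$-way LCP-merge described in the context outputs the sorted sequence $\mathcal S_0$ of all $n=\sum_k|\mathcal S_k|$ strings together with its LCP array $H_0$, and it performs at most $\Delta L + n\log_2 K + K$ character comparisons, where $\Delta L = L(H_0)-\sum_{k=1}^K L(H_k)$.
   Context: Strings are zero-terminated finite sequences over a totally ordered alphabet, ordered lexicographically; $\mathrm{lcp}(s,t)$ is the length of their longest common prefix. For a sorted sequence $s_1\le\dots\le s_m$ its LCP array is $H=(\bot,h_2,\dots,h_m)$ with $h_i=\mathrm{lcp}(s_{i-1},s_i)$, and $L(H)=\sum_{i\ge2} h_i$. Each input ends with a sentinel string $\infty$ larger than all strings. LCP-Compare: given $(a,s_a,h_a)$ and $(b,s_b,h_b)$ where $h_a=\mathrm{lcp}(p,s_a)$, $h_b=\mathrm{lcp}(p,s_b)$ for some string $p\le s_a,s_b$: if $h_a<h_b$ return $(b,h_b,a,h_a)$; if $h_b<h_a$ return $(a,h_a,b,h_b)$; if $h_a=h_b$, set $h':=h_a$ and compare $s_a[h'+1]$ with $s_b[h'+1]$, incrementing $h'$ while they are equal and not the terminator; then return $(a,h_a,b,h')$ if $s_a[h'+1]\le s_b[h'+1]$ and $(b,h_b,a,h')$ otherwise. Counting convention: each loop test yielding equality is one character comparison; the final failing test together with the following $\le$ test is one comparison; cases $h_a\ne h_b$ use none. $K$-way LCP-merge (LCP-aware tournament/loser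 tree): the tree is an implicit perfect binary tree with nodes $1,\dots,K$ (node $\lceil v/2\rceil$ is the parent of $v$); input $k$ corresponds to leaf position $K+k$. Node $v\ge 2$ stores a pair $(y_v,h_v)$: the index of the loser of the game at $v$ and the LCP of that loser's current string with the winner of that game; node 1 stores the overall winner $(w,h_1)$. Let $s_k$ denote the current head of input $k$. Initialization: for $k=1,\dots,K$, start with $(x,h'):=(k,\bar h)$ at $v:=K+k$ and, while $v$ is even, set $v:=v/2$ and $(x,h',y_v,h_v):=\text{LCP-Compare}((x,s_x,h'),(y_v,s_{y_v},h_v))$; then store $(y_v,h_v):=(x,h')$; finally $w:=y_1$. Main loop (repeated $n$ times): output $s_w$ with LCP entry $h_1$; advance input $w$ to its next string $s_w$ and set $(x,h'):=(w,\text{the LCP-array entry of this new string in } H_w)$, $v:=K+w$; while $v>2$ set $v:=\lceil v/2\rceil$ and $(x,h',y_v,h_v):=\text{LCP-Compare}((x,s_x,h'),(y_v,s_{y_v},h_v))$; then set $(w,h_1):=(x,h')$. *)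

theory Defs
  imports Complex_Main "HOL-Library.List_Lexorder" "HOL-Library.Sublist" "HOL-Library.Multiset"
begin

text \<open>A string is a finite list over a linearly ordered alphabet; the zero terminator is
implicit (it is the position just after the end of the list and is smaller than every
character). The order on strings is the lexicographic order of HOL-Library.List_Lexorder,
where a proper prefix is smaller, i.e. exactly the order of zero-terminated strings.\<close>

fun lcp :: "'a list \<Rightarrow> 'a list \<Rightarrow> nat" where
  "lcp (x # xs) (y # ys) = (if x = y then Suc (lcp xs ys) else 0)"
| "lcp _ _ = 0"

text \<open>LCP array without the undefined first entry: the entries h_2,...,h_m.\<close>
fun lcp_array :: "'a list list \<Rightarrow> nat list" where
  "lcp_array (a # b # xs) = lcp a b # lcp_array (b # xs)"
| "lcp_array _ = []"

definition L :: "nat list \<Rightarrow> nat" where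
  "L H = sum_list H"

datatype 'a xstr = Fin "'a list" | Sentinel

text \<open>Characters: the terminator, ordinary characters, and the character of the sentinel
(larger than everything). The sentinel is modelled as an infinite string of Top characters.\<close>
datatype 'a ch = Term | Chr 'a | Top

fun ch_le :: "'a::linorder ch \<Rightarrow> 'a ch \<Rightarrow> bool" where
  "ch_le Term _ = True"
| "ch_le (Chr x) Term = False"
| "ch_le (Chr x) (Chr y) = (x \<le> y)"
| "ch_le (Chr x) Top = True"
| "ch_le Top Top = True"
| "ch_le Top _ = False"

text \<open>charat s i is the character s[i] (1-based).\<close>
fun charat :: "'a xstr \<Rightarrow> nat \<Rightarrow> 'a ch" where
  "charat (Fin s) i = (if 1 \<le> i \<and> i \<le> length s then Chr (s ! (i - 1)) else Term)"
| "charat Sentinel i = Top"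

fun is_chr :: "'a ch \<Rightarrow> bool" where
  "is_chr (Chr _) = True"
| "is_chr _ = False"

fun xlen :: "'a xstr \<Rightarrow> nat" where
  "xlen (Fin s) = length s"
| "xlen Sentinel = 0"

function ext_lcp :: "'a xstr \<Rightarrow> 'a xstr \<Rightarrow> nat \<Rightarrow> nat" where
  "ext_lcp a b h =
     (if charat a (Suc h) = charat b (Suc h) \<and> is_chr (charat a (Suc h))
      then ext_lcp a b (Suc h) else h)"
  by pat_completeness auto
termination
  apply (relation "measure (\<lambda>(a, b, h). xlen a - h)")
   apply simp
  subgoal for a b h by (cases a) (auto split: if_splits)
  done

declare ext_lcp.simps [simp del]

text \<open>LCP-Compare. Returns (winner, lcp of winner, loser, lcp of loser, number of character
comparisons performed).\<close>
definition lcp_compare ::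
  "nat \<Rightarrow> 'a::linorder xstr \<Rightarrow> nat \<Rightarrow> nat \<Rightarrow> 'a xstr \<Rightarrow> nat \<Rightarrow> nat \<times> nat \<times> nat \<times> nat \<times> nat" where
  "lcp_compare a sa ha b sb hb =
     (if ha < hb then (b, hb, a, ha, 0)
      else if hb < ha then (a, ha, b, hb, 0)
      else (let h' = ext_lcp sa sb ha in
            if ch_le (charat sa (Suc h')) (charat sb (Suc h'))
            then (a, ha, b, h', h' - ha + 1)
            else (b, hb, a, h', h' - ha + 1)))"

text \<open>Inputs are numbered 1..K; input k is Ss!(k-1); pos k is the (0-based) index of the
current head of input k, which is the sentinel once the input is exhausted.\<close>
definition head :: "'a list list list \<Rightarrow> (nat \<Rightarrow> nat) \<Rightarrow> nat \<Rightarrow> 'a xstr" where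
  "head Ss pos k = (if pos k < length (Ss ! (k - 1)) then Fin (Ss ! (k - 1) ! pos k) else Sentinel)"

definition play ::
  "'a::linorder list list list \<Rightarrow> (nat \<Rightarrow> nat) \<Rightarrow> nat \<Rightarrow> nat \<Rightarrow> nat \<Rightarrow> (nat \<Rightarrow> nat) \<Rightarrow> (nat \<Rightarrow> nat) \<Rightarrow> nat
   \<Rightarrow> nat \<times> nat \<times> (nat \<Rightarrow> nat) \<times> (nat \<Rightarrow> nat) \<times> nat" where
  "play Ss pos x h u y hv c =
     (case lcp_compare x (head Ss pos x) h (y u) (head Ss pos (y u)) (hv u) of
        (x', h', yl, hl, d) \<Rightarrow> (x', h', y(u := yl), hv(u := hl), c + d))"

function climb_init ::
  "'a::linorder list list list \<Rightarrow> (nat \<Rightarrow> nat) \<Rightarrow> nat \<Rightarrow> nat \<Rightarrow> nat \<Rightarrow> (nat \<Rightarrow> nat) \<Rightarrow> (nat \<Rightarrow> nat) \<Rightarrow> nat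
   \<Rightarrow> nat \<times> nat \<times> nat \<times> (nat \<Rightarrow> nat) \<times> (nat \<Rightarrow> nat) \<times> nat" where
  "climb_init Ss pos x h v y hv c =
     (if even v \<and> 2 < v then
        (case play Ss pos x h (v div 2) y hv c of
           (x', h', y', hv', c') \<Rightarrow> climb_init Ss pos x' h' (v div 2) y' hv' c')
      else (x, h, v, y, hv, c))"
  by pat_completeness auto
termination
  by (relation "measure (\<lambda>(Ss, pos, x, h, v, y, hv, c). v)") auto

declare climb_init.simps [simp del]

function climb ::
  "'a::linorder list list list \<Rightarrow> (nat \<Rightarrow> nat) \<Rightarrow> nat \<Rightarrow> nat \<Rightarrow> nat \<Rightarrow> (nat \<Rightarrow> nat) \<Rightarrow> (nat \<Rightarrow> nat) \<Rightarrow> nat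
   \<Rightarrow> nat \<times> nat \<times> (nat \<Rightarrow> nat) \<times> (nat \<Rightarrow> nat) \<times> nat" where
  "climb Ss pos x h v y hv c =
     (if 2 < v then
        (case play Ss pos x h ((v + 1) div 2) y hv c of
           (x', h', y', hv', c') \<Rightarrow> climb Ss pos x' h' ((v + 1) div 2) y' hv' c')
      else (x, h, y, hv, c))"
  by pat_completeness auto
termination
  by (relation "measure (\<lambda>(Ss, pos, x, h, v, y, hv, c). v)") auto

declare climb.simps [simp del]

definition init_step ::
  "'a::linorder list list list \<Rightarrow> nat \<Rightarrow> nat \<Rightarrow> (nat \<Rightarrow> nat) \<times> (nat \<Rightarrow> nat) \<times> nat \<Rightarrow> nat
   \<Rightarrow> (nat \<Rightarrow> nat) \<times> (nat \<Rightarrow> nat) \<times> nat" where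
  "init_step Ss K hbar st k =
     (case st of (y, hv, c) \<Rightarrow>
       (case climb_init Ss (\<lambda>_. 0) k hbar (K + k) y hv c of
          (x, h, v, y', hv', c') \<Rightarrow> (y'((v + 1) div 2 := x), hv'((v + 1) div 2 := h), c')))"

text \<open>Merge state: (pos, y, hv, w, h_1, output so far, comparison count).\<close>
type_synonym 'a mstate =
  "(nat \<Rightarrow> nat) \<times> (nat \<Rightarrow> nat) \<times> (nat \<Rightarrow> nat) \<times> nat \<times> nat \<times> ('a xstr \<times> nat) list \<times> nat"

definition merge_init :: "'a::linorder list list list \<Rightarrow> nat \<Rightarrow> nat \<Rightarrow> 'a mstate" where
  "merge_init Ss K hbar =
     (case fold (\<lambda>k st. init_step Ss K hbar st k) [1..<K + 1] (\<lambda>_. 0, \<lambda>_. 0, 0) of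
        (y, hv, c) \<Rightarrow> ((\<lambda>_. 0), y, hv, y 1, hv 1, [], c))"

text \<open>One iteration of the main loop. The LCP entry of the sentinel (after the last string
of an input) is lcp(s_m, \<infinity>) = 0.\<close>
definition merge_step :: "'a::linorder list list list \<Rightarrow> nat list list \<Rightarrow> nat \<Rightarrow> 'a mstate \<Rightarrow> 'a mstate" where
  "merge_step Ss Hs K st =
     (case st of (pos, y, hv, w, h1, out, c) \<Rightarrow>
       (let out' = out @ [(head Ss pos w, h1)];
            pos' = pos(w := Suc (pos w));
            h = (if pos' w < length (Ss ! (w - 1)) then Hs ! (w - 1) ! (pos' w - 1) else 0)
        in (case climb Ss pos' w h (K + w) y hv c of
              (x, h', y', hv', c') \<Rightarrow> (pos', y', hv', x, h', out', c'))))"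

definition lcp_merge ::
  "nat \<Rightarrow> nat \<Rightarrow> 'a::linorder list list list \<Rightarrow> nat list list \<Rightarrow> ('a xstr \<times> nat) list \<times> nat" where
  "lcp_merge K hbar Ss Hs =
     (case (merge_step Ss Hs K ^^ sum_list (map length Ss)) (merge_init Ss K hbar) of
        (pos, y, hv, w, h1, out, c) \<Rightarrow> (out, c))"

end

theory Submission
  imports Defs
begin

(* The proof is an amortized (potential) argument. Every LCP-Compare is a game between two
   players described relative to a common reference string; its comparisons are paid by the
   increase of the two recorded LCPs, up to one comparison per game (lcp_compare_game).
   A loser tree stores at every node the loser of its game with its LCP relative to the
   winner (loser_tree); playing a game on top of two valid subtrees gives a valid subtree
   (node_game). Initialization is organized as a recursive build of the tree with K-1 games
   (build_correct), and each iteration of the main loop replays the m = log2 K games on the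
   path of the input that advanced (replay_correct). The invariant merge_inv then states that
   comparisons plus the LCP values fed into the tree by the inputs are bounded by the LCPs
   recorded in the tree and in the output plus K-1 + j*m. At the end the tree only holds
   sentinels, whose recorded LCPs are at most hbar for initially empty inputs; this yields the
   theorem. *)

section \<open>Longest common prefixes\<close>

lemma lcp_sym: "lcp s t = lcp t s"
  by (induction s t rule: lcp.induct) auto

lemma lcp_ultrametric: "min (lcp r s) (lcp r t) \<le> lcp s t"
proof (induction r arbitrary: s t)
  case (Cons a r)
  show ?case
  proof (cases s; cases t)
    fix s' t' b c assume "s = b # s'" "t = c # t'"
    then show ?thesis using Cons.IH[of s' t'] by (auto simp: min_def split: if_splits)
  qed auto
qed simp

lemma lcp_less_imp_eq: "lcp r s < lcp r t \<Longrightarrow> lcp s t = lcp r s"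
  using lcp_ultrametric[of r s t] lcp_ultrametric[of t r s] lcp_sym[of r t] lcp_sym[of s t]
  by (auto simp: min_def split: if_splits)

lemma lcp_less_imp_le: "r \<le> s \<Longrightarrow> lcp r s < lcp r t \<Longrightarrow> t \<le> s"
proof (induction r arbitrary: s t)
  case (Cons a r)
  then show ?case by (cases s; cases t) (auto split: if_splits)
qed simp

lemma le_iff_ch_le_after_lcp:
  "(s \<le> t) = ch_le (charat (Fin s) (Suc (lcp s t))) (charat (Fin t) (Suc (lcp s t)))"
proof (induction s arbitrary: t)
  case Nil
  then show ?case by (cases t) auto
next
  case (Cons a s)
  show ?case
  proof (cases t)
    case (Cons b t')
    have shift: "charat (Fin (c # u)) (Suc (Suc i)) = charat (Fin u) (Suc i)" for c u i
      by auto
    show ?thesis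
      using Cons.IH[of t'] \<open>t = b # t'\<close> by (cases "a = b") (auto simp: less_le shift)
  qed auto
qed

lemma lcp_nth_eq: "i < lcp s t \<Longrightarrow> i < length s \<and> i < length t \<and> s ! i = t ! i"
proof (induction s t arbitrary: i rule: lcp.induct)
  case (1 x xs y ys)
  then show ?case by (cases i) (auto split: if_splits)
qed auto

lemma lcp_nth_neq: "lcp s t < length s \<Longrightarrow> lcp s t < length t \<Longrightarrow> s ! lcp s t \<noteq> t ! lcp s t"
  by (induction s t rule: lcp.induct) auto

lemma ext_lcp_Fin: "h \<le> lcp s t \<Longrightarrow> ext_lcp (Fin s) (Fin t) h = lcp s t"
proof (induction "lcp s t - h" arbitrary: h)
  case 0
  then have h: "h = lcp s t" by simp
  have "\<not> (charat (Fin s) (Suc h) = charat (Fin t) (Suc h) \<and> is_chr (charat (Fin s) (Suc h)))"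
    using h lcp_nth_neq[of s t] by (auto split: if_splits)
  then show ?case using h by (subst ext_lcp.simps) auto
next
  case (Suc x)
  then have "h < lcp s t" by simp
  then have "charat (Fin s) (Suc h) = charat (Fin t) (Suc h) \<and> is_chr (charat (Fin s) (Suc h))"
    using lcp_nth_eq[of h s t] by auto
  then have "ext_lcp (Fin s) (Fin t) h = ext_lcp (Fin s) (Fin t) (Suc h)"
    by (subst ext_lcp.simps) auto
  also have "\<dots> = lcp s t" using Suc by simp
  finally show ?case .
qed

lemma ext_lcp_Sentinel_left: "ext_lcp Sentinel b h = h"
  by (subst ext_lcp.simps) auto

lemma ext_lcp_Sentinel_right: "ext_lcp (Fin s) Sentinel h = h"
  by (subst ext_lcp.simps) (auto split: if_splits)

lemma prefix_imp_lcp_eq: "prefix p s \<Longrightarrow> lcp p s = length p"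
proof (induction p arbitrary: s)
  case (Cons a p)
  then show ?case by (cases s) auto
qed simp

lemma common_prefix_le_lcp: "prefix p s \<Longrightarrow> prefix p t \<Longrightarrow> length p \<le> lcp s t"
proof (induction p arbitrary: s t)
  case (Cons a p)
  then show ?case by (cases s; cases t) auto
qed simp

lemma prefix_imp_le: "prefix p s \<Longrightarrow> p \<le> (s::'a::linorder list)"
proof (induction p arbitrary: s)
  case (Cons a p)
  then show ?case by (cases s) auto
qed simp

lemma length_lcp_array: "length (lcp_array xs) = length xs - 1"
  by (induction xs rule: lcp_array.induct) auto

lemma nth_lcp_array: "i + 1 < length xs \<Longrightarrow> lcp_array xs ! i = lcp (xs ! i) (xs ! (i + 1))"
proof (induction xs arbitrary: i rule: lcp_array.induct)
  case (1 a b xs)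
  then show ?case by (cases i) auto
qed auto

lemma lcp_array_snoc: "xs \<noteq> [] \<Longrightarrow> lcp_array (xs @ [a]) = lcp_array xs @ [lcp (last xs) a]"
  by (induction xs rule: lcp_array.induct) auto

section \<open>LCP-Compare\<close>

lemma lcp_compare_Fin_Fin:
  assumes rs: "r \<le> s" "ha = lcp r s" and rt: "r \<le> t" "hb = lcp r t"
    and res: "lcp_compare a (Fin s) ha b (Fin t) hb = (x, hx, l, hl, d)"
  shows "(x = a \<and> l = b \<and> hx = ha \<and> s \<le> t \<or> x = b \<and> l = a \<and> hx = hb \<and> t \<le> s)
    \<and> hl = lcp s t \<and> d + ha + hb \<le> 1 + hx + hl"
proof -
  consider "ha < hb" | "hb < ha" | "ha = hb" by linarith
  then show ?thesis
  proof cases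
    case 1
    then have "lcp s t = ha" "t \<le> s"
      using lcp_less_imp_eq[of r s t] lcp_less_imp_le[of r s t] rs rt by auto
    then show ?thesis using res 1 by (auto simp: lcp_compare_def)
  next
    case 2
    then have "lcp s t = hb" "s \<le> t"
      using lcp_less_imp_eq[of r t s] lcp_less_imp_le[of r t s] lcp_sym[of s t] rs rt by auto
    then show ?thesis using res 2 by (auto simp: lcp_compare_def)
  next
    case 3
    have "ha \<le> lcp s t" using lcp_ultrametric[of r s t] rs rt 3 by simp
    then have ext: "ext_lcp (Fin s) (Fin t) hb = lcp s t" using 3 by (simp add: ext_lcp_Fin)
    have order: "(s \<le> t) = ch_le (charat (Fin s) (Suc (lcp s t))) (charat (Fin t) (Suc (lcp s t)))"
      by (rule le_iff_ch_le_after_lcp)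
    have "lcp_compare a (Fin s) ha b (Fin t) hb =
      (if s \<le> t then (a, ha, b, lcp s t, lcp s t - ha + 1) else (b, hb, a, lcp s t, lcp s t - ha + 1))"
      using 3 by (simp add: lcp_compare_def Let_def ext order del: charat.simps)
    then show ?thesis using res 3 \<open>ha \<le> lcp s t\<close> by (auto split: if_splits)
  qed
qed

lemma ch_le_Top_cases: "ch_le (charat (Fin s) i) Top" "\<not> ch_le Top (charat (Fin s) i)"
  by auto

lemma lcp_compare_Fin_Sentinel:
  "hb \<le> ha \<Longrightarrow> lcp_compare a (Fin s) ha b Sentinel hb = (a, ha, b, hb, if hb = ha then 1 else 0)"
  by (auto simp: lcp_compare_def Let_def ext_lcp_Sentinel_right ch_le_Top_cases simp del: charat.simps(1))

lemma lcp_compare_Sentinel_Fin: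
  "ha \<le> hb \<Longrightarrow> lcp_compare a Sentinel ha b (Fin t) hb = (b, hb, a, ha, if ha = hb then 1 else 0)"
  by (auto simp: lcp_compare_def Let_def ext_lcp_Sentinel_left ch_le_Top_cases simp del: charat.simps(1))

lemma lcp_compare_Sentinel_Sentinel:
  "lcp_compare a Sentinel ha b Sentinel hb =
     (if ha < hb then (b, hb, a, ha, 0) else if hb < ha then (a, ha, b, hb, 0) else (a, ha, b, ha, 1))"
  by (simp add: lcp_compare_def Let_def ext_lcp_Sentinel_left)

locale merge_setting =
  fixes Ss :: "'a::linorder list list list" and Hs :: "nat list list"
    and K hbar m :: nat and P :: "'a list"
  assumes K_def: "K = 2 ^ m" and length_Ss: "length Ss = K" and length_Hs: "length Hs = K"
    and sorted_inputs: "\<forall>k<K. sorted (Ss ! k)" and Hs_def: "\<forall>k<K. Hs ! k = lcp_array (Ss ! k)"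
    and length_P: "length P = hbar" and prefix_P: "\<forall>k<K. \<forall>s\<in>set (Ss ! k). prefix P s"
begin

text \<open>The largest LCP that may be recorded for an exhausted input k: its sentinel enters
the tree with LCP hbar if the input was empty from the start, and with LCP 0 (the LCP
entry of the sentinel) otherwise.\<close>
definition sentinel_lcp :: "nat \<Rightarrow> nat" where
  "sentinel_lcp k = (if Ss ! (k - 1) = [] then hbar else 0)"

lemma sentinel_lcp_le: "sentinel_lcp k \<le> hbar"
  by (simp add: sentinel_lcp_def)

text \<open>The information the algorithm keeps about input k, whose current head is hds k,
relative to a reference string rr (the string it last lost or won against): rr is below
the head and h is their LCP; for a sentinel head, h is bounded by sentinel_lcp k.\<close>
definition lcp_info :: "(nat \<Rightarrow> 'a xstr) \<Rightarrow> 'a xstr \<Rightarrow> nat \<Rightarrow> nat \<Rightarrow> bool" where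
  "lcp_info hds rr k h = (case hds k of
      Fin s \<Rightarrow> (\<exists>r. rr = Fin r \<and> r \<le> s \<and> h = lcp r s)
    | Sentinel \<Rightarrow> h \<le> sentinel_lcp k)"

definition good_heads :: "(nat \<Rightarrow> 'a xstr) \<Rightarrow> bool" where
  "good_heads hds = (\<forall>k s. k \<in> {1..K} \<and> hds k = Fin s \<longrightarrow> prefix P s)"

lemma good_heads_head: "good_heads (head Ss pos)"
  unfolding good_heads_def
proof (intro allI impI)
  fix k s assume k: "k \<in> {1..K} \<and> head Ss pos k = Fin s"
  then have "s \<in> set (Ss ! (k - 1))" by (auto simp: head_def split: if_splits)
  moreover have "k - 1 < K" using k by auto
  ultimately show "prefix P s" using prefix_P by blast
qed

lemma lcp_compare_game:
  assumes r: "prefix P r" and ka: "ka \<in> {1..K}" and kb: "kb \<in> {1..K}" and g: "good_heads hds"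
    and ra: "lcp_info hds (Fin r) ka ha" and rb: "lcp_info hds (Fin r) kb hb"
    and res: "lcp_compare ka (hds ka) ha kb (hds kb) hb = (x, hx, l, hl, d)"
  shows "((x = ka \<and> l = kb \<and> hx = ha) \<or> (x = kb \<and> l = ka \<and> hx = hb))
     \<and> lcp_info hds (Fin r) x hx \<and> lcp_info hds (hds x) l hl \<and> d + ha + hb \<le> 1 + hx + hl"
proof -
  have Fin_ge: "hbar \<le> h" if "k \<in> {1..K}" "hds k = Fin s" "lcp_info hds (Fin r) k h" for k s h
    using that g common_prefix_le_lcp[OF r, of s] length_P by (auto simp: good_heads_def lcp_info_def)
  have Sentinel_le: "h \<le> hbar" if "hds k = Sentinel" "lcp_info hds (Fin r) k h" for k h
    using that sentinel_lcp_le[of k] by (auto simp: lcp_info_def)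
  show ?thesis
  proof (cases "hds ka")
    case (Fin s)
    show ?thesis
    proof (cases "hds kb")
      case (Fin t)
      have "r \<le> s" "ha = lcp r s" "r \<le> t" "hb = lcp r t"
        using ra rb \<open>hds ka = Fin s\<close> Fin by (auto simp: lcp_info_def)
      from lcp_compare_Fin_Fin[OF this res[unfolded \<open>hds ka = Fin s\<close> Fin]]
      show ?thesis using ra rb \<open>hds ka = Fin s\<close> Fin lcp_sym[of s t] by (auto simp: lcp_info_def)
    next
      case Sentinel
      have "hb \<le> ha" using Fin_ge[OF ka Fin ra] Sentinel_le[OF Sentinel rb] by linarith
      then show ?thesis using res ra rb Fin Sentinel lcp_compare_Fin_Sentinel[of hb ha ka s kb]
        by (auto simp: lcp_info_def)
    qed
  next
    case Sentinel
    show ?thesis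
    proof (cases "hds kb")
      case (Fin t)
      have "ha \<le> hb" using Fin_ge[OF kb Fin rb] Sentinel_le[OF Sentinel ra] by linarith
      then show ?thesis using res ra rb Fin Sentinel lcp_compare_Sentinel_Fin[of ha hb ka kb t]
        by (auto simp: lcp_info_def)
    next
      case Sentinel
      then show ?thesis using res ra rb \<open>hds ka = Sentinel\<close>
        by (auto simp: lcp_info_def lcp_compare_Sentinel_Sentinel split: if_splits)
    qed
  qed
qed

end

section \<open>Shape of the tournament tree\<close>

text \<open>The subtree whose topmost game is played at node j+1 is identified by j. In these
indices the tree is the usual heap: j has the children 2j and 2j+1, the root is 1, and input
k sits at index K+k-1. A subtree of height t thus plays its games at game_nodes j t and has
the inputs leaves j t.\<close>

lemma lt_Suc_div_mult: "0 < (d::nat) \<Longrightarrow> n < (n div d + 1) * d"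
proof -
  assume d: "0 < d"
  have "n div d * d + n mod d = n" by (rule div_mult_mod_eq)
  moreover have "n mod d < d" using d by simp
  moreover have "(n div d + 1) * d = n div d * d + d" by (simp add: distrib_right)
  ultimately show ?thesis by linarith
qed

lemma div_Suc_power_eq: "(q::nat) div 2 ^ Suc s = j \<longleftrightarrow> q div 2 ^ s = 2 * j \<or> q div 2 ^ s = 2 * j + 1"
proof -
  have half: "(p::nat) div 2 = j \<longleftrightarrow> p = 2 * j \<or> p = 2 * j + 1" for p by presburger
  show ?thesis by (simp only: power_Suc2 div_mult2_eq half)
qed

context merge_setting begin

definition game_nodes :: "nat \<Rightarrow> nat \<Rightarrow> nat set" where
  "game_nodes j t = {v. 1 \<le> v \<and> (\<exists>s<t. (v - 1) div 2 ^ s = j)}"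

definition leaves :: "nat \<Rightarrow> nat \<Rightarrow> nat set" where
  "leaves j t = {k. 1 \<le> k \<and> (K + k - 1) div 2 ^ t = j}"

definition in_tree :: "nat \<Rightarrow> nat \<Rightarrow> bool" where
  "in_tree j t = (K \<le> j * 2 ^ t \<and> (j + 1) * 2 ^ t \<le> 2 * K \<and> 1 \<le> j)"

lemma game_nodes_0 [simp]: "game_nodes j 0 = {}"
  by (simp add: game_nodes_def)

lemma game_nodes_Suc: "game_nodes j (Suc t) = insert (j + 1) (game_nodes (2 * j) t \<union> game_nodes (2 * j + 1) t)"
proof -
  have "(\<exists>s<Suc t. (v - 1) div 2 ^ s = j) \<longleftrightarrow> v - 1 = j \<or> (\<exists>s<t. (v - 1) div 2 ^ Suc s = j)" for v
    by (metis One_nat_def div_by_1 less_Suc_eq_0_disj not_less_eq power_0)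
  then show ?thesis unfolding game_nodes_def div_Suc_power_eq by auto
qed

lemma finite_game_nodes: "finite (game_nodes j t)"
proof -
  have "game_nodes j t \<subseteq> {..(j + 1) * 2 ^ t}"
  proof
    fix v assume "v \<in> game_nodes j t"
    then obtain s where s: "s < t" "1 \<le> v" "(v - 1) div 2 ^ s = j" unfolding game_nodes_def by auto
    then have "v - 1 < (j + 1) * 2 ^ s" using lt_Suc_div_mult[of "2 ^ s" "v - 1"] by simp
    moreover have "(j + 1) * 2 ^ s \<le> (j + 1) * 2 ^ t" using s by (intro mult_le_mono2 power_increasing) auto
    ultimately show "v \<in> {..(j + 1) * 2 ^ t}" by simp
  qed
  then show ?thesis using finite_subset by blast
qed

lemma game_nodes_ge: "v \<in> game_nodes j t \<Longrightarrow> j + 1 \<le> v"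
proof -
  assume "v \<in> game_nodes j t"
  then obtain s where "1 \<le> v" "(v - 1) div 2 ^ s = j" unfolding game_nodes_def by auto
  moreover have "(v - 1) div 2 ^ s \<le> v - 1" by (rule div_le_dividend)
  ultimately show ?thesis by simp
qed

lemma div_power_shift: "(a::nat) div 2 ^ s = b \<Longrightarrow> s \<le> s' \<Longrightarrow> a div 2 ^ s' = b div 2 ^ (s' - s)"
proof -
  assume a: "a div 2 ^ s = b" "s \<le> s'"
  then have "(2::nat) ^ s' = 2 ^ s * 2 ^ (s' - s)" by (simp add: power_add[symmetric])
  then show ?thesis using a by (simp add: div_mult2_eq)
qed

lemma game_nodes_disjoint:
  assumes "1 \<le> j"
  shows "game_nodes (2 * j) t \<inter> game_nodes (2 * j + 1) t = {}"
    "j + 1 \<notin> game_nodes (2 * j) t" "j + 1 \<notin> game_nodes (2 * j + 1) t"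
proof -
  show "j + 1 \<notin> game_nodes (2 * j) t" "j + 1 \<notin> game_nodes (2 * j + 1) t"
    using game_nodes_ge[of "j + 1"] assms by fastforce+
  show "game_nodes (2 * j) t \<inter> game_nodes (2 * j + 1) t = {}"
  proof (rule ccontr)
    assume "game_nodes (2 * j) t \<inter> game_nodes (2 * j + 1) t \<noteq> {}"
    then obtain v s s' where a: "(v - 1) div 2 ^ s = 2 * j" "(v - 1) div 2 ^ s' = 2 * j + 1"
      unfolding game_nodes_def by auto
    show False
    proof (cases "s \<le> s'")
      case True
      from div_power_shift[OF a(1) True] a(2) have "(2 * j) div 2 ^ (s' - s) = 2 * j + 1" by simp
      moreover have "(2 * j) div 2 ^ (s' - s) \<le> 2 * j" by (rule div_le_dividend)
      ultimately show False by simp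
    next
      case False
      from div_power_shift[OF a(2)] False a(1) have "(2 * j + 1) div 2 ^ (s - s') = 2 * j" by simp
      moreover have "(2::nat) \<le> 2 ^ (s - s')" using False power_increasing[of 1 "s - s'" "2::nat"] by simp
      then have "(2 * j + 1) div 2 ^ (s - s') \<le> (2 * j + 1) div 2" by (rule div_le_mono2[rotated]) simp
      ultimately show False using assms by simp
    qed
  qed
qed

lemma sum_game_nodes_Suc:
  "1 \<le> j \<Longrightarrow> (\<Sum>v\<in>game_nodes j (Suc t). f v) =
     f (j + 1) + (\<Sum>v\<in>game_nodes (2 * j) t. f v) + (\<Sum>v\<in>game_nodes (2 * j + 1) t. (f v :: nat))"
  unfolding game_nodes_Suc using game_nodes_disjoint[of j t] finite_game_nodes
  by (simp add: sum.union_disjoint)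

lemma leaves_Suc: "leaves j (Suc t) = leaves (2 * j) t \<union> leaves (2 * j + 1) t"
  unfolding leaves_def div_Suc_power_eq by auto

lemma leaves_disjoint: "leaves (2 * j) t \<inter> leaves (2 * j + 1) t = {}"
  unfolding leaves_def by auto

lemma leaves_0: "K \<le> j \<Longrightarrow> leaves j 0 = {j + 1 - K}"
  unfolding leaves_def by auto

lemma finite_leaves: "finite (leaves j t)"
proof -
  have "leaves j t \<subseteq> {..(j + 1) * 2 ^ t + K}"
  proof
    fix k assume "k \<in> leaves j t"
    then have "(K + k - 1) div 2 ^ t = j" "1 \<le> k" unfolding leaves_def by auto
    then have "K + k - 1 < (j + 1) * 2 ^ t" using lt_Suc_div_mult[of "2 ^ t" "K + k - 1"] by simp
    then show "k \<in> {..(j + 1) * 2 ^ t + K}" by simp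
  qed
  then show ?thesis using finite_subset by blast
qed

lemma in_tree_children: "in_tree j (Suc t) \<Longrightarrow> in_tree (2 * j) t \<and> in_tree (2 * j + 1) t"
  unfolding in_tree_def by (auto simp: power_Suc)

lemma leaves_subset: "in_tree j t \<Longrightarrow> leaves j t \<subseteq> {1..K}"
proof
  fix k assume w: "in_tree j t" and k: "k \<in> leaves j t"
  then have "(K + k - 1) div 2 ^ t = j" "1 \<le> k" unfolding leaves_def by auto
  then have "K + k - 1 < (j + 1) * 2 ^ t" using lt_Suc_div_mult[of "2 ^ t" "K + k - 1"] by simp
  then show "k \<in> {1..K}" using w \<open>1 \<le> k\<close> unfolding in_tree_def by auto
qed

lemma in_tree_root: "in_tree 1 m"
  unfolding in_tree_def using K_def by simp

lemma leaves_root: "leaves 1 m = {1..K}"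
proof -
  have K0: "0 < K" using K_def by simp
  have "(K + k - 1) div K = 1 \<longleftrightarrow> k \<le> K" if "1 \<le> k" for k
  proof
    assume "(K + k - 1) div K = 1"
    then show "k \<le> K" using lt_Suc_div_mult[OF K0, of "K + k - 1"] by simp
  next
    assume "k \<le> K"
    then have "K + k - 1 = 1 * K + (k - 1)" "k - 1 < K" using that by auto
    then show "(K + k - 1) div K = 1" by (simp only: div_mult_self3 div_less)
  qed
  then show ?thesis unfolding leaves_def K_def[symmetric] by auto
qed

end

section \<open>Loser trees\<close>

definition xstr_le :: "'a::linorder xstr \<Rightarrow> 'a xstr \<Rightarrow> bool" where
  "xstr_le a b = (case b of Sentinel \<Rightarrow> True | Fin t \<Rightarrow> (\<exists>s. a = Fin s \<and> s \<le> t))"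

lemma xstr_le_refl: "xstr_le a a"
  by (auto simp: xstr_le_def split: xstr.splits)

lemma xstr_le_trans: "xstr_le a b \<Longrightarrow> xstr_le b c \<Longrightarrow> xstr_le a c"
  by (auto simp: xstr_le_def split: xstr.splits)

context merge_setting begin

lemma lcp_info_xstr_le: "lcp_info hds rr k h \<Longrightarrow> xstr_le rr (hds k)"
  by (auto simp: lcp_info_def xstr_le_def split: xstr.splits)

lemma lcp_info_cong: "hds k = hds' k \<Longrightarrow> lcp_info hds rr k h = lcp_info hds' rr k h"
  by (simp add: lcp_info_def)

fun winner :: "(nat \<Rightarrow> nat) \<Rightarrow> nat \<Rightarrow> nat \<Rightarrow> nat" where
  "winner y j 0 = j + 1 - K"
| "winner y j (Suc t) =
     (let a = winner y (2 * j) t; b = winner y (2 * j + 1) t in if y (j + 1) = a then b else a)"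

fun loser_tree :: "(nat \<Rightarrow> 'a xstr) \<Rightarrow> (nat \<Rightarrow> nat) \<Rightarrow> (nat \<Rightarrow> nat) \<Rightarrow> nat \<Rightarrow> nat \<Rightarrow> bool" where
  "loser_tree hds y hv j 0 = True"
| "loser_tree hds y hv j (Suc t) =
     (loser_tree hds y hv (2 * j) t \<and> loser_tree hds y hv (2 * j + 1) t
      \<and> y (j + 1) \<in> {winner y (2 * j) t, winner y (2 * j + 1) t}
      \<and> lcp_info hds (hds (winner y j (Suc t))) (y (j + 1)) (hv (j + 1)))"

lemma winner_in_leaves: "in_tree j t \<Longrightarrow> winner y j t \<in> leaves j t"
proof (induction t arbitrary: j)
  case 0
  then show ?case unfolding in_tree_def by (simp add: leaves_0)
next
  case (Suc t)
  then show ?case using in_tree_children[OF Suc.prems] by (auto simp: Let_def leaves_Suc)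
qed

lemma winner_path:
  assumes tree: "in_tree j (Suc t)" and valid: "loser_tree hds y hv j (Suc t)" and w: "winner y j (Suc t) = w"
    and uq: "u = 2 * j \<and> q = 2 * j + 1 \<or> u = 2 * j + 1 \<and> q = 2 * j" and wu: "w \<in> leaves u t"
  shows "winner y u t = w \<and> y (j + 1) = winner y q t \<and> w \<notin> leaves q t"
proof -
  have "in_tree u t" "in_tree q t" using uq in_tree_children[OF tree] by auto
  then have wins: "winner y u t \<in> leaves u t" "winner y q t \<in> leaves q t" using winner_in_leaves by auto
  have wq: "w \<notin> leaves q t" using wu uq leaves_disjoint[of j t] by auto
  have "winner y u t \<noteq> winner y q t" using wins uq leaves_disjoint[of j t] by auto
  then have "y (j + 1) \<in> {winner y u t, winner y q t}" "winner y j (Suc t) \<noteq> y (j + 1)"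
    "winner y j (Suc t) \<in> {winner y u t, winner y q t}"
    using valid uq by (auto simp: Let_def)
  then show ?thesis using w wins wq by auto
qed

lemma winner_local: "\<forall>v\<in>game_nodes j t. y v = y' v \<Longrightarrow> winner y j t = winner y' j t"
proof (induction t arbitrary: j)
  case (Suc t)
  then show ?case by (simp add: game_nodes_Suc Let_def)
qed simp

lemma loser_tree_local:
  "loser_tree hds y hv j t \<Longrightarrow> in_tree j t \<Longrightarrow> \<forall>v\<in>game_nodes j t. y v = y' v \<and> hv v = hv' v
   \<Longrightarrow> \<forall>k\<in>leaves j t. hds k = hds' k \<Longrightarrow> loser_tree hds' y' hv' j t"
proof (induction t arbitrary: j)
  case (Suc t)
  have ch: "in_tree (2 * j) t" "in_tree (2 * j + 1) t" using in_tree_children[OF Suc.prems(2)] by auto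
  have same_winners: "winner y (2 * j) t = winner y' (2 * j) t" "winner y (2 * j + 1) t = winner y' (2 * j + 1) t"
    "winner y j (Suc t) = winner y' j (Suc t)"
    using winner_local[of _ t y y'] winner_local[of j "Suc t" y y'] Suc.prems(3) by (auto simp: game_nodes_Suc)
  have "winner y j (Suc t) \<in> leaves j (Suc t)" using winner_in_leaves Suc.prems(2) by blast
  moreover have "y (j + 1) \<in> leaves j (Suc t)"
    using Suc.prems(1) winner_in_leaves[OF ch(1)] winner_in_leaves[OF ch(2)] by (auto simp: leaves_Suc)
  moreover have "y (j + 1) = y' (j + 1)" "hv (j + 1) = hv' (j + 1)"
    using Suc.prems(3) by (auto simp: game_nodes_Suc)
  ultimately have "lcp_info hds' (hds' (winner y' j (Suc t))) (y' (j + 1)) (hv' (j + 1))"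
    using Suc.prems(1,4) same_winners(3) lcp_info_cong[of hds "y (j + 1)" hds'] by auto
  then show ?case
    using Suc.IH[OF _ ch(1)] Suc.IH[OF _ ch(2)] Suc.prems same_winners \<open>y (j + 1) = y' (j + 1)\<close>
    by (auto simp: game_nodes_Suc leaves_Suc)
qed simp

lemma loser_tree_winner_min:
  "loser_tree hds y hv j t \<Longrightarrow> in_tree j t \<Longrightarrow> \<forall>k\<in>leaves j t. xstr_le (hds (winner y j t)) (hds k)"
proof (induction t arbitrary: j)
  case 0
  then show ?case unfolding in_tree_def by (simp add: leaves_0 xstr_le_refl)
next
  case (Suc t)
  have ch: "in_tree (2 * j) t" "in_tree (2 * j + 1) t" using in_tree_children[OF Suc.prems(2)] by auto
  let ?a = "winner y (2 * j) t" and ?b = "winner y (2 * j + 1) t"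
  have top: "xstr_le (hds (winner y j (Suc t))) (hds (y (j + 1)))" using Suc.prems(1) lcp_info_xstr_le by auto
  have below: "\<forall>k\<in>leaves (2 * j) t. xstr_le (hds ?a) (hds k)" "\<forall>k\<in>leaves (2 * j + 1) t. xstr_le (hds ?b) (hds k)"
    using Suc.IH ch Suc.prems(1) by auto
  consider "y (j + 1) = ?a" "winner y j (Suc t) = ?b" | "y (j + 1) = ?b" "winner y j (Suc t) = ?a"
    using Suc.prems(1) by (auto simp: Let_def)
  then show ?case
  proof cases
    case 1
    then show ?thesis using top below unfolding leaves_Suc by (auto intro: xstr_le_trans)
  next
    case 2
    then show ?thesis using top below unfolding leaves_Suc by (auto intro: xstr_le_trans)
  qed
qed

lemma loser_tree_sum:
  "loser_tree hds y hv j t \<Longrightarrow> in_tree j t \<Longrightarrow>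
   (\<Sum>v\<in>game_nodes j t. f (y v)) + f (winner y j t) = (\<Sum>k\<in>leaves j t. (f k :: nat))"
proof (induction t arbitrary: j)
  case 0
  then show ?case unfolding in_tree_def by (simp add: leaves_0)
next
  case (Suc t)
  have ch: "in_tree (2 * j) t" "in_tree (2 * j + 1) t" using in_tree_children[OF Suc.prems(2)] by auto
  have "1 \<le> j" using Suc.prems(2) unfolding in_tree_def by simp
  have "(\<Sum>k\<in>leaves j (Suc t). f k) = (\<Sum>k\<in>leaves (2 * j) t. f k) + (\<Sum>k\<in>leaves (2 * j + 1) t. f k)"
    unfolding leaves_Suc using leaves_disjoint finite_leaves by (simp add: sum.union_disjoint)
  moreover have "f (y (j + 1)) + f (winner y j (Suc t)) = f (winner y (2 * j) t) + f (winner y (2 * j + 1) t)"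
    using Suc.prems(1) by (auto simp: Let_def)
  ultimately show ?case
    using Suc.IH[OF _ ch(1)] Suc.IH[OF _ ch(2)] Suc.prems(1) sum_game_nodes_Suc[OF \<open>1 \<le> j\<close>] by simp
qed

lemma loser_tree_sentinels:
  "loser_tree hds y hv j t \<Longrightarrow> in_tree j t \<Longrightarrow> \<forall>k\<in>leaves j t. hds k = Sentinel
   \<Longrightarrow> \<forall>v\<in>game_nodes j t. hv v \<le> sentinel_lcp (y v)"
proof (induction t arbitrary: j)
  case (Suc t)
  have ch: "in_tree (2 * j) t" "in_tree (2 * j + 1) t" using in_tree_children[OF Suc.prems(2)] by auto
  have "y (j + 1) \<in> leaves j (Suc t)"
    using Suc.prems(1) winner_in_leaves[OF ch(1)] winner_in_leaves[OF ch(2)] by (auto simp: leaves_Suc)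
  then have "hv (j + 1) \<le> sentinel_lcp (y (j + 1))" using Suc.prems(1,3) by (auto simp: lcp_info_def)
  then show ?case
    using Suc.IH[OF _ ch(1)] Suc.IH[OF _ ch(2)] Suc.prems by (auto simp: game_nodes_Suc leaves_Suc)
qed simp

lemma node_game:
  assumes tree: "in_tree j (Suc t)"
    and left: "loser_tree hds y hv (2 * j) t" and right: "loser_tree hds y hv (2 * j + 1) t"
    and players: "{xa, xb} = {winner y (2 * j) t, winner y (2 * j + 1) t}"
    and r: "prefix P r" and g: "good_heads hds"
    and ra: "lcp_info hds (Fin r) xa ha" and rb: "lcp_info hds (Fin r) xb hb"
    and res: "lcp_compare xa (hds xa) ha xb (hds xb) hb = (x, h, l, hl, d)"
  shows "loser_tree hds (y(j + 1 := l)) (hv(j + 1 := hl)) j (Suc t) \<and> winner (y(j + 1 := l)) j (Suc t) = x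
    \<and> lcp_info hds (Fin r) x h \<and> d + ha + hb \<le> 1 + h + hl"
proof -
  let ?y = "y(j + 1 := l)" and ?hv = "hv(j + 1 := hl)"
  have ch: "in_tree (2 * j) t" "in_tree (2 * j + 1) t" using in_tree_children[OF tree] by auto
  have "1 \<le> j" using tree unfolding in_tree_def by simp
  note disj = game_nodes_disjoint[OF this, of t]
  have wins: "winner y (2 * j) t \<in> leaves (2 * j) t" "winner y (2 * j + 1) t \<in> leaves (2 * j + 1) t"
    using winner_in_leaves ch by auto
  then have distinct: "winner y (2 * j) t \<noteq> winner y (2 * j + 1) t" using leaves_disjoint[of j t] by auto
  have "xa \<in> {1..K}" "xb \<in> {1..K}" using players wins leaves_subset[OF ch(1)] leaves_subset[OF ch(2)]
    by (auto simp: doubleton_eq_iff)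
  note game = lcp_compare_game[OF r this g ra rb res]
  have sub: "loser_tree hds ?y ?hv (2 * j) t" "loser_tree hds ?y ?hv (2 * j + 1) t"
    using loser_tree_local[OF left ch(1)] loser_tree_local[OF right ch(2)] disj by auto
  have sub_winners: "winner ?y (2 * j) t = winner y (2 * j) t" "winner ?y (2 * j + 1) t = winner y (2 * j + 1) t"
    using winner_local[of "2 * j" t ?y y] winner_local[of "2 * j + 1" t ?y y] disj by auto
  have top: "winner ?y j (Suc t) = x"
    using sub_winners game players distinct by (auto simp: Let_def doubleton_eq_iff)
  show ?thesis using sub sub_winners top game players by (auto simp: doubleton_eq_iff)
qed

end

section \<open>Initialization\<close>

context merge_setting begin

text \<open>Initialization, organized recursively: build the left subtree, store its winner at the
top node, build the right subtree, and play the top game between the right winner (which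
climbs) and the stored left winner. Every input starts with LCP hbar against P.\<close>
fun build :: "nat \<Rightarrow> nat \<Rightarrow> (nat \<Rightarrow> nat) \<times> (nat \<Rightarrow> nat) \<times> nat
    \<Rightarrow> nat \<times> nat \<times> (nat \<Rightarrow> nat) \<times> (nat \<Rightarrow> nat) \<times> nat" where
  "build j 0 (y, hv, c) = (j + 1 - K, hbar, y, hv, c)"
| "build j (Suc t) (y, hv, c) = (case build (2 * j) t (y, hv, c) of (xl, hl, y1, hv1, c1) \<Rightarrow>
      case build (2 * j + 1) t (y1(j + 1 := xl), hv1(j + 1 := hl), c1) of (xr, hr, y2, hv2, c2) \<Rightarrow>
      play Ss (\<lambda>_. 0) xr hr (j + 1) y2 hv2 c2)"

definition climb_store :: "nat \<Rightarrow> nat \<times> nat \<times> (nat \<Rightarrow> nat) \<times> (nat \<Rightarrow> nat) \<times> nat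
    \<Rightarrow> (nat \<Rightarrow> nat) \<times> (nat \<Rightarrow> nat) \<times> nat" where
  "climb_store v st = (case st of (x, h, y, hv, c) \<Rightarrow> (case climb_init Ss (\<lambda>_. 0) x h v y hv c of
     (x', h', v', y', hv', c') \<Rightarrow> (y'((v' + 1) div 2 := x'), hv'((v' + 1) div 2 := h'), c')))"

lemma climb_store_odd: "odd v \<Longrightarrow> climb_store v (x, h, y, hv, c) = (y((v + 1) div 2 := x), hv((v + 1) div 2 := h), c)"
  unfolding climb_store_def by (subst climb_init.simps) simp

lemma climb_store_even:
  "even v \<Longrightarrow> 2 < v \<Longrightarrow> climb_store v (x, h, y, hv, c) = climb_store (v div 2) (play Ss (\<lambda>_. 0) x h (v div 2) y hv c)"
  unfolding climb_store_def by (subst climb_init.simps) (simp split: prod.splits)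

lemma fold_init_step_build:
  "in_tree j t \<Longrightarrow> fold (\<lambda>k st. init_step Ss K hbar st k) [j * 2 ^ t - K + 1 ..< (j + 1) * 2 ^ t - K + 1] (y, hv, c)
     = climb_store (j + 1) (build j t (y, hv, c))"
proof (induction t arbitrary: j y hv c)
  case 0
  then have "K \<le> j" unfolding in_tree_def by simp
  then have "[j * 2 ^ 0 - K + 1 ..< (j + 1) * 2 ^ 0 - K + 1] = [j + 1 - K]" by (simp add: upt_rec Suc_diff_le)
  then show ?case using \<open>K \<le> j\<close> by (simp add: init_step_def climb_store_def)
next
  case (Suc t)
  have ch: "in_tree (2 * j) t" "in_tree (2 * j + 1) t" using in_tree_children[OF Suc.prems] by auto
  have "K \<le> j * 2 ^ Suc t" "1 \<le> j" using Suc.prems unfolding in_tree_def by auto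
  have split: "[j * 2 ^ Suc t - K + 1 ..< (j + 1) * 2 ^ Suc t - K + 1] =
     [(2 * j) * 2 ^ t - K + 1 ..< (2 * j + 1) * 2 ^ t - K + 1] @ [(2 * j + 1) * 2 ^ t - K + 1 ..< (2 * j + 1 + 1) * 2 ^ t - K + 1]"
  proof -
    have "(2 * j) * 2 ^ t - K + 1 \<le> (2 * j + 1) * 2 ^ t - K + 1" "(2 * j + 1) * 2 ^ t - K + 1 \<le> (2 * j + 1 + 1) * 2 ^ t - K + 1"
      by (simp_all add: diff_le_mono)
    moreover have "j * 2 ^ Suc t = (2 * j) * 2 ^ t" "(j + 1) * 2 ^ Suc t = (2 * j + 1 + 1) * 2 ^ t"
      by (simp_all add: power_Suc)
    ultimately show ?thesis by (metis le_add_diff_inverse upt_add_eq_append)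
  qed
  obtain xl hl y1 hv1 c1 where left: "build (2 * j) t (y, hv, c) = (xl, hl, y1, hv1, c1)"
    by (cases "build (2 * j) t (y, hv, c)") auto
  obtain xr hr y2 hv2 c2 where right: "build (2 * j + 1) t (y1(j + 1 := xl), hv1(j + 1 := hl), c1) = (xr, hr, y2, hv2, c2)"
    by (cases "build (2 * j + 1) t (y1(j + 1 := xl), hv1(j + 1 := hl), c1)") auto
  have "fold (\<lambda>k st. init_step Ss K hbar st k) [j * 2 ^ Suc t - K + 1 ..< (j + 1) * 2 ^ Suc t - K + 1] (y, hv, c)
     = fold (\<lambda>k st. init_step Ss K hbar st k) [(2 * j + 1) * 2 ^ t - K + 1 ..< (2 * j + 1 + 1) * 2 ^ t - K + 1]
        (climb_store (2 * j + 1) (build (2 * j) t (y, hv, c)))"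
    unfolding split fold_append comp_def using Suc.IH[OF ch(1)] by simp
  also have "climb_store (2 * j + 1) (build (2 * j) t (y, hv, c)) = (y1(j + 1 := xl), hv1(j + 1 := hl), c1)"
    unfolding left by (simp add: climb_store_odd)
  also have "fold (\<lambda>k st. init_step Ss K hbar st k) [(2 * j + 1) * 2 ^ t - K + 1 ..< (2 * j + 1 + 1) * 2 ^ t - K + 1]
     (y1(j + 1 := xl), hv1(j + 1 := hl), c1) = climb_store (2 * j + 1 + 1) (xr, hr, y2, hv2, c2)"
    by (subst Suc.IH[OF ch(2)]) (simp only: right)
  also have "\<dots> = climb_store (j + 1) (play Ss (\<lambda>_. 0) xr hr (j + 1) y2 hv2 c2)"
    using climb_store_even[of "2 * j + 1 + 1"] \<open>1 \<le> j\<close> by simp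
  also have "\<dots> = climb_store (j + 1) (build j (Suc t) (y, hv, c))" using left right by simp
  finally show ?case .
qed

lemma lcp_info_initial: "k \<in> {1..K} \<Longrightarrow> lcp_info (head Ss (\<lambda>_. 0)) (Fin P) k hbar"
proof (cases "Ss ! (k - 1) = []")
  case False
  assume k: "k \<in> {1..K}"
  then have "k - 1 < K" by auto
  then have p: "prefix P (Ss ! (k - 1) ! 0)" using prefix_P False by simp
  show ?thesis using False prefix_imp_le[OF p] prefix_imp_lcp_eq[OF p] length_P by (simp add: lcp_info_def head_def)
qed (simp add: lcp_info_def head_def sentinel_lcp_def)

lemma build_correct:
  "in_tree j t \<Longrightarrow> build j t (y, hv, c) = (x, h, y', hv', c') \<Longrightarrow>
    loser_tree (head Ss (\<lambda>_. 0)) y' hv' j t \<and> winner y' j t = x \<and> lcp_info (head Ss (\<lambda>_. 0)) (Fin P) x h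
    \<and> (\<forall>v. v \<notin> game_nodes j t \<longrightarrow> y' v = y v \<and> hv' v = hv v)
    \<and> c' + 2 ^ t * hbar + 1 \<le> c + h + (\<Sum>v\<in>game_nodes j t. hv' v) + 2 ^ t"
proof (induction t arbitrary: j y hv c x h y' hv' c')
  case 0
  then have "x = j + 1 - K" "x \<in> {1..K}" "h = hbar" "y' = y" "hv' = hv" "c' = c"
    unfolding in_tree_def by auto
  then show ?case using lcp_info_initial by simp
next
  case (Suc t)
  let ?hd = "head Ss (\<lambda>_. 0)"
  have ch: "in_tree (2 * j) t" "in_tree (2 * j + 1) t" using in_tree_children[OF Suc.prems(1)] by auto
  have "1 \<le> j" using Suc.prems(1) unfolding in_tree_def by simp
  note disj = game_nodes_disjoint[OF this, of t]
  obtain xl hl y1 hv1 c1 where left: "build (2 * j) t (y, hv, c) = (xl, hl, y1, hv1, c1)"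
    by (cases "build (2 * j) t (y, hv, c)") auto
  obtain xr hr y2 hv2 c2 where right: "build (2 * j + 1) t (y1(j + 1 := xl), hv1(j + 1 := hl), c1) = (xr, hr, y2, hv2, c2)"
    by (cases "build (2 * j + 1) t (y1(j + 1 := xl), hv1(j + 1 := hl), c1)") auto
  note L = Suc.IH[OF ch(1) left] and R = Suc.IH[OF ch(2) right]
  have stored: "y2 (j + 1) = xl" "hv2 (j + 1) = hl" using R disj by auto
  obtain xw hw l hl' d where game: "lcp_compare xr (?hd xr) hr xl (?hd xl) hl = (xw, hw, l, hl', d)"
    by (cases "lcp_compare xr (?hd xr) hr xl (?hd xl) hl") auto
  have res: "x = xw" "h = hw" "y' = y2(j + 1 := l)" "hv' = hv2(j + 1 := hl')" "c' = c2 + d"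
    using Suc.prems(2) left right game stored by (auto simp: play_def)
  have same_left: "\<forall>v\<in>game_nodes (2 * j) t. y2 v = y1 v \<and> hv2 v = hv1 v" using R disj by auto
  have "loser_tree ?hd y2 hv2 (2 * j) t" using loser_tree_local[OF _ ch(1) _] L same_left by auto
  moreover have "winner y2 (2 * j) t = xl" using winner_local[of "2 * j" t y2 y1] same_left L by auto
  ultimately have top: "loser_tree ?hd y' hv' j (Suc t) \<and> winner y' j (Suc t) = x
      \<and> lcp_info ?hd (Fin P) x h \<and> d + hr + hl \<le> 1 + h + hl'"
    using node_game[OF Suc.prems(1), of ?hd y2 hv2 xr xl, OF _ _ _ prefix_order.refl good_heads_head _ _ game]
      L R res by auto
  have "(\<Sum>v\<in>game_nodes j (Suc t). hv' v) = hl' + (\<Sum>v\<in>game_nodes (2 * j) t. hv1 v) + (\<Sum>v\<in>game_nodes (2 * j + 1) t. hv2 v)"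
  proof -
    have "(\<Sum>v\<in>game_nodes (2 * j) t. hv' v) = (\<Sum>v\<in>game_nodes (2 * j) t. hv1 v)"
      using same_left disj res by (intro sum.cong) auto
    moreover have "(\<Sum>v\<in>game_nodes (2 * j + 1) t. hv' v) = (\<Sum>v\<in>game_nodes (2 * j + 1) t. hv2 v)"
      using disj res by (intro sum.cong) auto
    ultimately show ?thesis using sum_game_nodes_Suc[OF \<open>1 \<le> j\<close>, of hv'] res by simp
  qed
  then have "c' + 2 ^ Suc t * hbar + 1 \<le> c + h + (\<Sum>v\<in>game_nodes j (Suc t). hv' v) + 2 ^ Suc t"
    using L R top res by simp
  moreover have "\<forall>v. v \<notin> game_nodes j (Suc t) \<longrightarrow> y' v = y v \<and> hv' v = hv v"
    using res L R by (auto simp: game_nodes_Suc)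
  ultimately show ?case using top by blast
qed

end

section \<open>One step of the main loop\<close>

context merge_setting begin

fun replay :: "(nat \<Rightarrow> nat) \<Rightarrow> nat \<Rightarrow> nat \<Rightarrow> nat \<times> nat \<times> (nat \<Rightarrow> nat) \<times> (nat \<Rightarrow> nat) \<times> nat
    \<Rightarrow> nat \<times> nat \<times> (nat \<Rightarrow> nat) \<times> (nat \<Rightarrow> nat) \<times> nat" where
  "replay pos l 0 st = st"
| "replay pos l (Suc t) st =
     (case replay pos l t st of (x, h, y, hv, c) \<Rightarrow> play Ss pos x h (l div 2 ^ Suc t + 1) y hv c)"

lemma climb_replay:
  "1 \<le> l div 2 ^ t \<Longrightarrow> climb Ss pos x h (l + 1) y hv c =
     (case replay pos l t (x, h, y, hv, c) of (x', h', y', hv', c') \<Rightarrow> climb Ss pos x' h' (l div 2 ^ t + 1) y' hv' c')"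
proof (induction t)
  case (Suc t)
  let ?u = "l div 2 ^ t"
  have half: "l div 2 ^ Suc t = ?u div 2" by (simp only: power_Suc2 div_mult2_eq)
  then have "2 \<le> ?u" using Suc.prems by linarith
  then have step: "climb Ss pos x' h' (Suc ?u) y' hv' c' =
     (case play Ss pos x' h' (Suc (?u div 2)) y' hv' c' of
        (x2, h2, y2, hv2, c2) \<Rightarrow> climb Ss pos x2 h2 (Suc (?u div 2)) y2 hv2 c2)" for x' h' y' hv' c'
    by (subst climb.simps) (simp split: prod.splits)
  have "l div (2 * 2 ^ t) = ?u div 2" using half by simp
  then show ?case using Suc.IH \<open>2 \<le> ?u\<close> by (simp add: step half split: prod.splits)
qed simp

lemma replay_correct:
  assumes "in_tree j t" "w \<in> leaves j t" "l = K + w - 1"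
    and "loser_tree hds y hv j t" "winner y j t = w" "hds w = Fin p" "prefix P p"
    and "\<forall>k. k \<noteq> w \<longrightarrow> head Ss pos k = hds k" "lcp_info (head Ss pos) (Fin p) w h0"
    and "replay pos l t (w, h0, y, hv, c) = (x, h, y', hv', c')"
  shows "loser_tree (head Ss pos) y' hv' j t \<and> winner y' j t = x \<and> lcp_info (head Ss pos) (Fin p) x h
    \<and> (\<forall>v. v \<notin> game_nodes j t \<longrightarrow> y' v = y v \<and> hv' v = hv v)
    \<and> c' + (\<Sum>v\<in>game_nodes j t. hv v) + h0 \<le> c + (\<Sum>v\<in>game_nodes j t. hv' v) + h + t"
  using assms
proof (induction t arbitrary: j x h y' hv' c')
  case (Suc t)
  let ?hd = "head Ss pos"
  have ch: "in_tree (2 * j) t" "in_tree (2 * j + 1) t" using in_tree_children[OF Suc.prems(1)] by auto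
  have "1 \<le> j" using Suc.prems(1) unfolding in_tree_def by simp
  note disj = game_nodes_disjoint[OF this, of t]
  obtain u q where uq: "u = 2 * j \<and> q = 2 * j + 1 \<or> u = 2 * j + 1 \<and> q = 2 * j" and wu: "w \<in> leaves u t"
    using Suc.prems(2) leaves_Suc by auto
  have tree_uq: "in_tree u t" "in_tree q t" using uq ch by auto
  have wwu: "winner y u t = w" and yq: "y (j + 1) = winner y q t" and wq: "w \<notin> leaves q t"
    using winner_path[OF Suc.prems(1,4,5) uq wu] by auto
  have "winner y q t \<noteq> w" using winner_in_leaves[OF tree_uq(2)] wq by auto
  then have rel_q: "lcp_info ?hd (Fin p) (winner y q t) (hv (j + 1))"
    using Suc.prems(4,5,6,8) yq lcp_info_cong[of ?hd "winner y q t" hds] by auto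
  obtain x1 h1 y1 hv1 c1 where sub: "replay pos l t (w, h0, y, hv, c) = (x1, h1, y1, hv1, c1)"
    by (cases "replay pos l t (w, h0, y, hv, c)") auto
  have I: "loser_tree ?hd y1 hv1 u t \<and> winner y1 u t = x1 \<and> lcp_info ?hd (Fin p) x1 h1
    \<and> (\<forall>v. v \<notin> game_nodes u t \<longrightarrow> y1 v = y v \<and> hv1 v = hv v)
    \<and> c1 + (\<Sum>v\<in>game_nodes u t. hv v) + h0 \<le> c + (\<Sum>v\<in>game_nodes u t. hv1 v) + h1 + t"
    using Suc.IH[OF tree_uq(1) wu Suc.prems(3)] Suc.prems(4-9) sub uq wwu by auto
  have same_q: "\<forall>v\<in>game_nodes q t. y1 v = y v \<and> hv1 v = hv v" using I uq disj by auto
  have stored: "y1 (j + 1) = winner y q t" "hv1 (j + 1) = hv (j + 1)" using I yq disj uq by auto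
  have "loser_tree hds y hv q t" using Suc.prems(4) uq by auto
  moreover have "\<forall>k\<in>leaves q t. hds k = ?hd k" using Suc.prems(8) wq by auto
  ultimately have "loser_tree ?hd y1 hv1 q t" using loser_tree_local[OF _ tree_uq(2)] same_q by auto
  then have children: "loser_tree ?hd y1 hv1 (2 * j) t" "loser_tree ?hd y1 hv1 (2 * j + 1) t"
    using I uq by auto
  have "winner y1 q t = winner y q t" using winner_local[of q t y1 y] same_q by auto
  then have players: "{x1, winner y q t} = {winner y1 (2 * j) t, winner y1 (2 * j + 1) t}"
    using I uq by auto
  obtain xw hw lo hl' d where game: "lcp_compare x1 (?hd x1) h1 (winner y q t) (?hd (winner y q t)) (hv (j + 1))
      = (xw, hw, lo, hl', d)"
    by (cases "lcp_compare x1 (?hd x1) h1 (winner y q t) (?hd (winner y q t)) (hv (j + 1))") auto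
  have "l div 2 ^ Suc t = j" using Suc.prems(2,3) unfolding leaves_def by auto
  then have res: "x = xw" "h = hw" "y' = y1(j + 1 := lo)" "hv' = hv1(j + 1 := hl')" "c' = c1 + d"
    using Suc.prems(10) sub game stored by (auto simp: play_def)
  have top: "loser_tree ?hd y' hv' j (Suc t) \<and> winner y' j (Suc t) = x
      \<and> lcp_info ?hd (Fin p) x h \<and> d + h1 + hv (j + 1) \<le> 1 + h + hl'"
    using node_game[OF Suc.prems(1) children players Suc.prems(7) good_heads_head _ rel_q game] I
    unfolding res by blast
  have "(\<Sum>v\<in>game_nodes j (Suc t). hv v) = hv (j + 1) + (\<Sum>v\<in>game_nodes u t. hv v) + (\<Sum>v\<in>game_nodes q t. hv v)"
    using sum_game_nodes_Suc[OF \<open>1 \<le> j\<close>, of hv] uq by auto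
  moreover have "(\<Sum>v\<in>game_nodes j (Suc t). hv' v) = hl' + (\<Sum>v\<in>game_nodes u t. hv1 v) + (\<Sum>v\<in>game_nodes q t. hv v)"
  proof -
    have "(\<Sum>v\<in>game_nodes u t. hv' v) = (\<Sum>v\<in>game_nodes u t. hv1 v)"
      using res disj uq by (intro sum.cong) auto
    moreover have "(\<Sum>v\<in>game_nodes q t. hv' v) = (\<Sum>v\<in>game_nodes q t. hv v)"
      using res same_q disj uq by (intro sum.cong) auto
    ultimately show ?thesis using sum_game_nodes_Suc[OF \<open>1 \<le> j\<close>, of hv'] uq res by auto
  qed
  ultimately have "c' + (\<Sum>v\<in>game_nodes j (Suc t). hv v) + h0 \<le> c + (\<Sum>v\<in>game_nodes j (Suc t). hv' v) + h + Suc t"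
    using I top res by simp
  moreover have "\<forall>v. v \<notin> game_nodes j (Suc t) \<longrightarrow> y' v = y v \<and> hv' v = hv v"
    using res I uq by (auto simp: game_nodes_Suc)
  ultimately show ?case using top by blast
qed simp

end

section \<open>The merge invariant\<close>

lemma sum_update_at:
  "finite A \<Longrightarrow> w \<in> A \<Longrightarrow> \<forall>k\<in>A. k \<noteq> w \<longrightarrow> g' k = g k \<Longrightarrow>
   (\<Sum>k\<in>A. g' k) + g w = (\<Sum>k\<in>A. g k) + (g' w :: 'b::comm_monoid_add)"
proof -
  assume a: "finite A" "w \<in> A" "\<forall>k\<in>A. k \<noteq> w \<longrightarrow> g' k = g k"
  then have "(\<Sum>k\<in>A - {w}. g' k) = (\<Sum>k\<in>A - {w}. g k)" by (intro sum.cong) auto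
  then show ?thesis using a by (simp add: sum.remove ac_simps)
qed

context merge_setting begin

definition len :: "nat \<Rightarrow> nat" where
  "len k = length (Ss ! (k - 1))"

definition total :: nat where
  "total = sum_list (map length Ss)"

definition entry_lcp :: "nat \<Rightarrow> nat \<Rightarrow> nat" where
  "entry_lcp k i = (if Suc i < len k then Hs ! (k - 1) ! i else 0)"

definition input_lcp :: "nat \<Rightarrow> nat \<Rightarrow> nat" where
  "input_lcp k i = hbar + sum_list (take i (Hs ! (k - 1)))"

lemma total_eq_sum_len: "total = (\<Sum>k\<in>{1..K}. len k)"
  by (simp add: total_def len_def sum_list_sum_nth length_Ss atLeast0LessThan sum.atLeast1_atMost_eq)

lemma mset_concat_inputs: "mset (concat Ss) = (\<Sum>k\<in>{1..K}. mset (Ss ! (k - 1)))"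
  by (simp add: mset_concat sum_list_sum_nth length_Ss atLeast0LessThan sum.atLeast1_atMost_eq)

lemma Hs_nth: "k \<in> {1..K} \<Longrightarrow> Hs ! (k - 1) = lcp_array (Ss ! (k - 1))"
  using Hs_def by force

lemma input_lcp_Suc: "k \<in> {1..K} \<Longrightarrow> i < len k \<Longrightarrow> input_lcp k (Suc i) = input_lcp k i + entry_lcp k i"
  using Hs_nth[of k] by (auto simp: input_lcp_def entry_lcp_def len_def length_lcp_array take_Suc_conv_app_nth)

lemma lcp_info_advance:
  assumes w: "w \<in> {1..K}" and pw: "pos w < len w"
  shows "lcp_info (head Ss (pos(w := Suc (pos w)))) (Fin (Ss ! (w - 1) ! pos w)) w (entry_lcp w (pos w))"
proof (cases "Suc (pos w) < len w")
  case True
  have "sorted (Ss ! (w - 1))" using sorted_inputs w by auto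
  then have "Ss ! (w - 1) ! pos w \<le> Ss ! (w - 1) ! Suc (pos w)"
    using True by (simp add: sorted_iff_nth_mono len_def)
  then show ?thesis
    using True Hs_nth[OF w] nth_lcp_array[of "pos w" "Ss ! (w - 1)"]
    by (simp add: lcp_info_def head_def entry_lcp_def len_def)
qed (simp add: lcp_info_def head_def entry_lcp_def len_def)

text \<open>The invariant relating the already produced output to the strings taken from the
inputs. The reference string for the current winner w is the last string output (or P
before the first output).\<close>
definition output_inv :: "(nat \<Rightarrow> nat) \<Rightarrow> nat \<Rightarrow> nat \<Rightarrow> ('a xstr \<times> nat) list \<Rightarrow> 'a list list \<Rightarrow> bool" where
  "output_inv pos w h1 out S =
     (map fst out = map Fin S \<and> sorted S \<and> tl (map snd out) = lcp_array S
      \<and> (out \<noteq> [] \<longrightarrow> snd (hd out) = hbar)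
      \<and> lcp_info (head Ss pos) (Fin (if S = [] then P else last S)) w h1
      \<and> mset S = (\<Sum>k\<in>{1..K}. mset (take (pos k) (Ss ! (k - 1)))))"

text \<open>Its last conjunct is the amortized
cost bound: comparisons plus the LCP values brought into the tree by the inputs are
bounded by the LCPs recorded in the tree and in the output, one comparison for each of the
K-1 games of initialization, and m for each step of the main loop.\<close>
definition merge_inv :: "nat \<Rightarrow> 'a mstate \<Rightarrow> bool" where
  "merge_inv j st = (case st of (pos, y, hv, w, h1, out, c) \<Rightarrow>
     (\<forall>k\<in>{1..K}. pos k \<le> len k) \<and> (\<Sum>k\<in>{1..K}. pos k) = j
     \<and> loser_tree (head Ss pos) y hv 1 m \<and> winner y 1 m = w
     \<and> (\<exists>S. output_inv pos w h1 out S)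
     \<and> c + (\<Sum>k\<in>{1..K}. input_lcp k (pos k))
         \<le> h1 + (\<Sum>v\<in>game_nodes 1 m. hv v) + sum_list (map snd out) + (K - 1) + j * m)"

lemma merge_inv_init: "merge_inv 0 (merge_init Ss K hbar)"
proof -
  let ?hd = "head Ss (\<lambda>_. 0)"
  obtain x h y hv c where built: "build 1 m (\<lambda>_. 0, \<lambda>_. 0, 0) = (x, h, y, hv, c)"
    by (cases "build 1 m (\<lambda>_. 0, \<lambda>_. 0, 0)") auto
  have all_inputs: "[1 * 2 ^ m - K + 1 ..< 2 * 2 ^ m - K + 1] = [1..<K + 1]" using K_def by simp
  have "fold (\<lambda>k st. init_step Ss K hbar st k) [1..<K + 1] (\<lambda>_. 0, \<lambda>_. 0, 0) = climb_store 2 (x, h, y, hv, c)"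
    using fold_init_step_build[OF in_tree_root, of "\<lambda>_. 0" "\<lambda>_. 0" 0]
    by (simp only: one_add_one all_inputs built)
  moreover have "climb_store 2 (x, h, y, hv, c) = (y(1 := x), hv(1 := h), c)"
    unfolding climb_store_def by (subst climb_init.simps) simp
  ultimately have init: "merge_init Ss K hbar = (\<lambda>_. 0, y(1 := x), hv(1 := h), x, h, [], c)"
    unfolding merge_init_def by simp
  note B = build_correct[OF in_tree_root built]
  have "1 \<notin> game_nodes 1 m" using game_nodes_ge[of 1 1 m] by auto
  then have same: "\<forall>v\<in>game_nodes 1 m. y v = (y(1 := x)) v \<and> hv v = (hv(1 := h)) v" by auto
  have "loser_tree ?hd y hv 1 m" using B by blast
  from loser_tree_local[OF this in_tree_root same, where hds' = ?hd]
  have "loser_tree ?hd (y(1 := x)) (hv(1 := h)) 1 m" by (simp add: fun_upd_def)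
  moreover have "winner (y(1 := x)) 1 m = x" using winner_local[of 1 m y "y(1 := x)"] same B by auto
  moreover have "output_inv (\<lambda>_. 0) x h [] []" using B by (simp add: output_inv_def)
  moreover have "(\<Sum>v\<in>game_nodes 1 m. (hv(1 := h)) v) = (\<Sum>v\<in>game_nodes 1 m. hv v)"
    using same by (intro sum.cong) auto
  moreover have "c + K * hbar \<le> h + (\<Sum>v\<in>game_nodes 1 m. hv v) + (K - 1)"
    using B unfolding K_def[symmetric] by linarith
  ultimately show ?thesis unfolding init merge_inv_def by (auto simp: input_lcp_def)
qed

lemma output_inv_step:
  assumes inv: "output_inv pos w h1 out S" and w: "w \<in> {1..K}" and pw: "pos w < len w"
    and hw: "head Ss pos w = Fin p"
    and next_rel: "lcp_info (head Ss (pos(w := Suc (pos w)))) (Fin p) x h'"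
  shows "output_inv (pos(w := Suc (pos w))) x h' (out @ [(Fin p, h1)]) (S @ [p])"
proof -
  have pP: "prefix P p" using good_heads_head w hw unfolding good_heads_def by auto
  have rel: "lcp_info (head Ss pos) (Fin (if S = [] then P else last S)) w h1" and S: "sorted S"
    and outS: "map fst out = map Fin S" "tl (map snd out) = lcp_array S"
    using inv by (auto simp: output_inv_def)
  have empty: "out = [] \<longleftrightarrow> S = []" using outS by (metis Nil_is_map_conv)
  have "sorted (S @ [p])"
  proof (cases "S = []")
    case False
    then have "last S \<le> p" using rel hw by (simp add: lcp_info_def)
    moreover have "s \<le> last S" if s: "s \<in> set S" for s
    proof -
      obtain i where "i < length S" "S ! i = s" using s by (auto simp: in_set_conv_nth)
      then show ?thesis using sorted_nth_mono[OF S, of i "length S - 1"] False by (simp add: last_conv_nth)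
    qed
    ultimately show ?thesis using S by (auto simp: sorted_append intro: order.trans)
  qed simp
  moreover have "tl (map snd (out @ [(Fin p, h1)])) = lcp_array (S @ [p])"
  proof (cases "S = []")
    case False
    then have "h1 = lcp (last S) p" using rel hw by (simp add: lcp_info_def)
    moreover have "tl (map snd (out @ [(Fin p, h1)])) = tl (map snd out) @ [h1]"
      using False empty by (cases out) auto
    ultimately show ?thesis using outS lcp_array_snoc[OF False] by simp
  qed (use empty in auto)
  moreover have "snd (hd (out @ [(Fin p, h1)])) = hbar"
  proof (cases "S = []")
    case True
    then show ?thesis using rel hw empty prefix_imp_lcp_eq[OF pP] length_P by (simp add: lcp_info_def)
  qed (use inv empty in \<open>auto simp: output_inv_def\<close>)
  moreover have "mset (S @ [p]) = (\<Sum>k\<in>{1..K}. mset (take ((pos(w := Suc (pos w))) k) (Ss ! (k - 1))))"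
  proof -
    have "p = Ss ! (w - 1) ! pos w" using hw by (auto simp: head_def split: if_splits)
    then have "take (Suc (pos w)) (Ss ! (w - 1)) = take (pos w) (Ss ! (w - 1)) @ [p]"
      using pw by (simp add: len_def take_Suc_conv_app_nth)
    then show ?thesis
      using sum_update_at[of "{1..K}" w "\<lambda>k. mset (take ((pos(w := Suc (pos w))) k) (Ss ! (k - 1)))"
          "\<lambda>k. mset (take (pos k) (Ss ! (k - 1)))"] w inv
      by (simp add: output_inv_def)
  qed
  ultimately show ?thesis using outS next_rel by (simp add: output_inv_def)
qed

end

context merge_setting begin

lemma merge_step_replay:
  assumes w: "w \<in> {1..K}" and hw: "head Ss pos w = Fin p"
    and rep: "replay (pos(w := Suc (pos w))) (K + w - 1) m (w, entry_lcp w (pos w), y, hv, c) = (x, h', y', hv', c')"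
  shows "merge_step Ss Hs K (pos, y, hv, w, h1, out, c) = (pos(w := Suc (pos w)), y', hv', x, h', out @ [(Fin p, h1)], c')"
proof -
  let ?pos' = "pos(w := Suc (pos w))" and ?hn = "entry_lcp w (pos w)"
  have "w \<in> leaves 1 m" using w leaves_root by simp
  then have "(K + w - 1) div 2 ^ m = 1" unfolding leaves_def by simp
  moreover have "climb Ss ?pos' x h' (Suc (Suc 0)) y' hv' c' = (x, h', y', hv', c')"
    by (subst climb.simps) simp
  ultimately have "climb Ss ?pos' w ?hn (K + w - 1 + 1) y hv c = (x, h', y', hv', c')"
    using climb_replay[of "K + w - 1" m ?pos' w ?hn y hv c] rep by simp
  moreover have "K + w - 1 + 1 = K + w" using w by simp
  ultimately have climb: "climb Ss ?pos' w ?hn (K + w) y hv c = (x, h', y', hv', c')" by simp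
  have "merge_step Ss Hs K (pos, y, hv, w, h1, out, c) = (case climb Ss ?pos' w ?hn (K + w) y hv c of
      (x, h', y', hv', c') \<Rightarrow> (?pos', y', hv', x, h', out @ [(head Ss pos w, h1)], c'))"
    unfolding merge_step_def Let_def entry_lcp_def len_def by simp
  then show ?thesis unfolding climb hw by simp
qed

text \<open>While strings remain, the overall winner is an input with a remaining string: its head
is the smallest head, and some head is not a sentinel.\<close>
lemma winner_unfinished:
  assumes pos: "\<forall>k\<in>{1..K}. pos k \<le> len k" and remaining: "(\<Sum>k\<in>{1..K}. pos k) < total"
    and tree: "loser_tree (head Ss pos) y hv 1 m" and w: "winner y 1 m = w"
  shows "w \<in> {1..K} \<and> pos w < len w \<and> head Ss pos w = Fin (Ss ! (w - 1) ! pos w)"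
proof -
  obtain k where k: "k \<in> {1..K}" "pos k < len k"
  proof (rule ccontr)
    assume "\<not> thesis"
    then have "\<forall>k\<in>{1..K}. len k \<le> pos k" using that by force
    then have "total \<le> (\<Sum>k\<in>{1..K}. pos k)" unfolding total_eq_sum_len by (intro sum_mono) auto
    then show False using remaining by simp
  qed
  have "w \<in> {1..K}" using winner_in_leaves[OF in_tree_root] w leaves_root by auto
  moreover have "xstr_le (head Ss pos w) (head Ss pos k)"
    using loser_tree_winner_min[OF tree in_tree_root] w k leaves_root by auto
  moreover have "head Ss pos k = Fin (Ss ! (k - 1) ! pos k)" using k by (simp add: head_def len_def)
  ultimately obtain s where "head Ss pos w = Fin s" by (auto simp: xstr_le_def)
  then show ?thesis using \<open>w \<in> {1..K}\<close> by (auto simp: head_def len_def split: if_splits)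
qed

lemma merge_inv_step:
  assumes j: "j < total" and inv: "merge_inv j st"
  shows "merge_inv (Suc j) (merge_step Ss Hs K st)"
proof -
  obtain pos y hv w h1 out c where st: "st = (pos, y, hv, w, h1, out, c)" by (cases st) auto
  let ?pos' = "pos(w := Suc (pos w))" and ?hn = "entry_lcp w (pos w)"
  have pos: "\<forall>k\<in>{1..K}. pos k \<le> len k" "(\<Sum>k\<in>{1..K}. pos k) = j"
    and tree: "loser_tree (head Ss pos) y hv 1 m" "winner y 1 m = w"
    and cost: "c + (\<Sum>k\<in>{1..K}. input_lcp k (pos k))
       \<le> h1 + (\<Sum>v\<in>game_nodes 1 m. hv v) + sum_list (map snd out) + (K - 1) + j * m"
    using inv unfolding merge_inv_def st by auto
  obtain S where S: "output_inv pos w h1 out S" using inv unfolding merge_inv_def st by auto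
  define p where "p = Ss ! (w - 1) ! pos w"
  have w: "w \<in> {1..K}" "pos w < len w" "head Ss pos w = Fin p"
    using winner_unfinished[OF pos(1) _ tree] pos(2) j by (auto simp: p_def)
  have "prefix P p" using good_heads_head w unfolding good_heads_def by auto
  obtain x h' y' hv' c' where rep: "replay ?pos' (K + w - 1) m (w, ?hn, y, hv, c) = (x, h', y', hv', c')"
    by (cases "replay ?pos' (K + w - 1) m (w, ?hn, y, hv, c)") auto
  have R: "loser_tree (head Ss ?pos') y' hv' 1 m \<and> winner y' 1 m = x \<and> lcp_info (head Ss ?pos') (Fin p) x h'
    \<and> c' + (\<Sum>v\<in>game_nodes 1 m. hv v) + ?hn \<le> c + (\<Sum>v\<in>game_nodes 1 m. hv' v) + h' + m"
  proof -
    have "w \<in> leaves 1 m" using w leaves_root by simp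
    moreover have "\<forall>k. k \<noteq> w \<longrightarrow> head Ss ?pos' k = head Ss pos k" by (simp add: head_def)
    moreover have "lcp_info (head Ss ?pos') (Fin p) w ?hn" using lcp_info_advance[of w pos] w by (simp add: p_def)
    ultimately show ?thesis using replay_correct[OF in_tree_root _ refl tree w(3) \<open>prefix P p\<close> _ _ rep] by blast
  qed
  have pos': "\<forall>k\<in>{1..K}. ?pos' k \<le> len k" "(\<Sum>k\<in>{1..K}. ?pos' k) = Suc j"
    using pos w sum_update_at[of "{1..K}" w ?pos' pos] by auto
  have out': "output_inv ?pos' x h' (out @ [(Fin p, h1)]) (S @ [p])"
    using output_inv_step[OF S w] R by blast
  have "(\<Sum>k\<in>{1..K}. input_lcp k (?pos' k)) = (\<Sum>k\<in>{1..K}. input_lcp k (pos k)) + ?hn"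
    using sum_update_at[of "{1..K}" w "\<lambda>k. input_lcp k (?pos' k)" "\<lambda>k. input_lcp k (pos k)"]
      input_lcp_Suc[OF w(1,2)] w by simp
  then have "c' + (\<Sum>k\<in>{1..K}. input_lcp k (?pos' k))
     \<le> h' + (\<Sum>v\<in>game_nodes 1 m. hv' v) + sum_list (map snd (out @ [(Fin p, h1)])) + (K - 1) + Suc j * m"
    using R cost by simp
  then show ?thesis unfolding st merge_step_replay[OF w(1,3) rep] merge_inv_def prod.case
    using pos' out' R by blast
qed

lemma merge_inv_iterate: "j \<le> total \<Longrightarrow> merge_inv j ((merge_step Ss Hs K ^^ j) (merge_init Ss K hbar))"
  by (induction j) (simp_all add: merge_inv_init merge_inv_step)

text \<open>After all strings are output, the LCPs recorded in the tree are sentinel LCPs, and at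
most one sentinel per initially empty input carries hbar.\<close>
lemma recorded_lcp_final:
  assumes exhausted: "\<forall>k\<in>{1..K}. pos k = len k"
    and tree: "loser_tree (head Ss pos) y hv 1 m" "winner y 1 m = w" and rel: "lcp_info (head Ss pos) rr w h1"
  shows "h1 + (\<Sum>v\<in>game_nodes 1 m. hv v) \<le> (\<Sum>k\<in>{1..K}. sentinel_lcp k)"
proof -
  have sentinels: "\<forall>k\<in>leaves 1 m. head Ss pos k = Sentinel" using exhausted leaves_root by (auto simp: head_def len_def)
  have "w \<in> leaves 1 m" using winner_in_leaves[OF in_tree_root] tree by auto
  then have "h1 \<le> sentinel_lcp w" using rel sentinels by (auto simp: lcp_info_def)
  moreover have "(\<Sum>v\<in>game_nodes 1 m. hv v) \<le> (\<Sum>v\<in>game_nodes 1 m. sentinel_lcp (y v))"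
    using loser_tree_sentinels[OF tree(1) in_tree_root sentinels] by (intro sum_mono) auto
  moreover have "(\<Sum>v\<in>game_nodes 1 m. sentinel_lcp (y v)) + sentinel_lcp w = (\<Sum>k\<in>{1..K}. sentinel_lcp k)"
    using loser_tree_sum[OF tree(1) in_tree_root, of sentinel_lcp] tree(2) leaves_root by simp
  ultimately show ?thesis by linarith
qed

text \<open>At most the initially empty inputs contribute hbar, and if anything is output at least
one input is not empty.\<close>
lemma sentinel_lcp_sum: "(\<Sum>k\<in>{1..K}. sentinel_lcp k) + (if total = 0 then 0 else hbar) \<le> K * hbar"
proof (cases "total = 0")
  case True
  then show ?thesis using sum_bounded_above[of "{1..K}" sentinel_lcp hbar] sentinel_lcp_le by simp
next
  case False
  then obtain k0 where k0: "k0 \<in> {1..K}" "0 < len k0" using total_eq_sum_len by (metis neq0_conv sum.neutral)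
  then have "sentinel_lcp k0 = 0" by (simp add: sentinel_lcp_def len_def)
  then have "(\<Sum>k\<in>{1..K}. sentinel_lcp k) = (\<Sum>k\<in>{1..K} - {k0}. sentinel_lcp k)" using k0 by (simp add: sum.remove)
  also have "\<dots> \<le> (K - 1) * hbar"
    using sum_bounded_above[of "{1..K} - {k0}" sentinel_lcp hbar] sentinel_lcp_le k0 by simp
  finally show ?thesis using False K_def by (simp add: algebra_simps le_diff_conv2)
qed

lemma input_lcp_final: "(\<Sum>k\<in>{1..K}. input_lcp k (len k)) = K * hbar + (\<Sum>k<K. L (Hs ! k))"
proof -
  have "input_lcp k (len k) = hbar + L (Hs ! (k - 1))" if k: "k \<in> {1..K}" for k
    using Hs_nth[OF k] by (simp add: input_lcp_def L_def len_def length_lcp_array)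
  then have "(\<Sum>k\<in>{1..K}. input_lcp k (len k)) = (\<Sum>k\<in>{1..K}. hbar + L (Hs ! (k - 1)))" by simp
  also have "\<dots> = K * hbar + (\<Sum>k<K. L (Hs ! k))" by (simp add: sum.distrib sum.atLeast1_atMost_eq)
  finally show ?thesis .
qed

lemma merge_inv_final:
  assumes inv: "merge_inv total (pos, y, hv, w, h1, out, c)"
  shows "\<exists>S0. map fst out = map Fin S0 \<and> sorted S0 \<and> mset S0 = mset (concat Ss)
     \<and> tl (map snd out) = lcp_array S0 \<and> c + (\<Sum>k<K. L (Hs ! k)) \<le> L (lcp_array S0) + (K - 1) + total * m"
proof -
  have pos: "\<forall>k\<in>{1..K}. pos k \<le> len k" "(\<Sum>k\<in>{1..K}. pos k) = total"
    and tree: "loser_tree (head Ss pos) y hv 1 m" "winner y 1 m = w"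
    and cost: "c + (\<Sum>k\<in>{1..K}. input_lcp k (pos k))
       \<le> h1 + (\<Sum>v\<in>game_nodes 1 m. hv v) + sum_list (map snd out) + (K - 1) + total * m"
    using inv unfolding merge_inv_def by auto
  obtain S where S: "output_inv pos w h1 out S" using inv unfolding merge_inv_def by auto
  have exhausted: "\<forall>k\<in>{1..K}. pos k = len k"
  proof (rule ccontr)
    assume "\<not> ?thesis"
    then obtain k where "k \<in> {1..K}" "pos k < len k" using pos(1) by force
    then have "(\<Sum>k\<in>{1..K}. pos k) < (\<Sum>k\<in>{1..K}. len k)" using pos(1) by (intro sum_strict_mono_ex1) auto
    then show False using pos(2) total_eq_sum_len by simp
  qed
  have mset_S: "mset S = mset (concat Ss)"
    using S exhausted unfolding output_inv_def mset_concat_inputs by (auto simp: len_def intro: sum.cong)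
  have "h1 + (\<Sum>v\<in>game_nodes 1 m. hv v) \<le> (\<Sum>k\<in>{1..K}. sentinel_lcp k)"
    using recorded_lcp_final[OF exhausted tree] S by (auto simp: output_inv_def)
  moreover have "sum_list (map snd out) = (if total = 0 then 0 else hbar) + L (lcp_array S)"
  proof -
    have "length S = total" using mset_S unfolding total_def by (metis size_mset length_concat)
    moreover have "map fst out = map Fin S" "tl (map snd out) = lcp_array S" "out \<noteq> [] \<longrightarrow> snd (hd out) = hbar"
      using S by (auto simp: output_inv_def)
    ultimately show ?thesis by (cases out) (auto simp: L_def)
  qed
  ultimately have "c + (\<Sum>k<K. L (Hs ! k)) \<le> L (lcp_array S) + (K - 1) + total * m"
    using cost sentinel_lcp_sum input_lcp_final exhausted by simp
  then show ?thesis using S mset_S by (auto simp: output_inv_def)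
qed

end

theorem mainTheorem4:
  fixes Ss :: "'a::linorder list list list" and Hs :: "nat list list" and K hbar :: nat
  assumes "\<exists>m. K = 2 ^ m"
    and "length Ss = K" and "length Hs = K"
    and "\<forall>k<K. sorted (Ss ! k)"
    and "\<forall>k<K. Hs ! k = lcp_array (Ss ! k)"
    and "\<exists>p. length p = hbar \<and> (\<forall>k<K. \<forall>s\<in>set (Ss ! k). prefix p s)"
  shows "\<exists>S0. map fst (fst (lcp_merge K hbar Ss Hs)) = map Fin S0
           \<and> sorted S0 \<and> mset S0 = mset (concat Ss)
           \<and> tl (map snd (fst (lcp_merge K hbar Ss Hs))) = lcp_array S0
           \<and> real (snd (lcp_merge K hbar Ss Hs))
               \<le> (real (L (lcp_array S0)) - (\<Sum>k<K. real (L (Hs ! k))))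
                  + real (sum_list (map length Ss)) * log 2 (real K) + real K"
proof -
  obtain m where m: "K = 2 ^ m" using assms(1) by blast
  obtain P where P: "length P = hbar" "\<forall>k<K. \<forall>s\<in>set (Ss ! k). prefix P s" using assms(6) by blast
  interpret merge_setting Ss Hs K hbar m P
    using m assms(2-5) P by unfold_locales auto
  obtain pos y hv w h1 out c where final: "(merge_step Ss Hs K ^^ total) (merge_init Ss K hbar) = (pos, y, hv, w, h1, out, c)"
    by (cases "(merge_step Ss Hs K ^^ total) (merge_init Ss K hbar)") auto
  then have result: "lcp_merge K hbar Ss Hs = (out, c)"
    unfolding lcp_merge_def total_def[symmetric] by simp
  have "merge_inv total (pos, y, hv, w, h1, out, c)" using merge_inv_iterate[OF order_refl] final by simp
  then obtain S0 where S0: "map fst out = map Fin S0" "sorted S0" "mset S0 = mset (concat Ss)"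
     "tl (map snd out) = lcp_array S0" "c + (\<Sum>k<K. L (Hs ! k)) \<le> L (lcp_array S0) + (K - 1) + total * m"
    using merge_inv_final by blast
  have "real c + (\<Sum>k<K. real (L (Hs ! k))) \<le> real (L (lcp_array S0)) + real (K - 1) + real total * real m"
    using S0(5) by (metis of_nat_add of_nat_le_iff of_nat_mult of_nat_sum)
  moreover have "log 2 (real K) = real m" using m by simp
  ultimately show ?thesis using S0 result unfolding total_def by auto
qed

end
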